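(* (a) For every integer $n \geq 4$, $8\left\lfloor \frac{n}{10} \right\rfloor + c(n_{10}) \leq \gamma_{b,2}(P_4 \square P_n)$, where $n_{10} \in \{0,1,\dots,9\}$ is the least residue of $n$ modulo $10$ and $c(0)=0$, $c(1)=2$, $c(2)=2$, $c(3)=3$, $c(4)=4$, $c(5)=5$, $c(6)=5$, $c(7)=6$, $c(8)=7$, $c(9)=8$. (b) For every integer $n \geq 4$ with $n \equiv 1, 4, 5,$ or $9 \pmod{10}$, equality holds: $\gamma_{b,2}(P_4 \square P_n) = 8\left\lfloor \frac{n}{10} \right\rfloor + c(n_{10})$.
   Context: For a graph $G$, a $2$-limited broadcast is a function $f: V(G) \to \{0,1,2\}$. A vertex $u$ hears the broadcast from $v$ if $f(v) > 0$ and $d(u,v) \leq f(v)$, where $d$ is the distance in $G$. The broadcast $f$ is dominating if every vertex of $G$ hears the broadcast from some vertex. The cost of $f$ is $\sum_{v \in V(G)} f(v)$. The $2$-limited broadcast domination number $\gamma_{b,2}(G)$ is the minimum cost of a $2$-limited dominating broadcast on $G$. $P_n$ denotes the path on $n$ vertices and $\square$ the Cartesian product of graphs. *)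

theory Defs
  imports Main
begin

fun walk :: "'a set \<Rightarrow> ('a \<Rightarrow> 'a \<Rightarrow> bool) \<Rightarrow> nat \<Rightarrow> 'a \<Rightarrow> 'a \<Rightarrow> bool" where
  "walk V E 0 u v = (u \<in> V \<and> u = v)"
| "walk V E (Suc k) u v = (\<exists>w. u \<in> V \<and> E u w \<and> walk V E k w v)"

(* graph distance (used only for connected graphs) *)
definition gdist :: "'a set \<Rightarrow> ('a \<Rightarrow> 'a \<Rightarrow> bool) \<Rightarrow> 'a \<Rightarrow> 'a \<Rightarrow> nat" where
  "gdist V E u v = (LEAST k. walk V E k u v)"

definition path_adj :: "nat \<Rightarrow> nat \<Rightarrow> bool" where
  "path_adj i j \<longleftrightarrow> i = j + 1 \<or> j = i + 1"

definition path_verts :: "nat \<Rightarrow> nat set" where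
  "path_verts n = {0..<n}"

definition cart_verts :: "'a set \<Rightarrow> 'b set \<Rightarrow> ('a \<times> 'b) set" where
  "cart_verts V1 V2 = V1 \<times> V2"

definition cart_adj :: "('a \<Rightarrow> 'a \<Rightarrow> bool) \<Rightarrow> ('b \<Rightarrow> 'b \<Rightarrow> bool) \<Rightarrow> ('a \<times> 'b) \<Rightarrow> ('a \<times> 'b) \<Rightarrow> bool" where
  "cart_adj E1 E2 x y \<longleftrightarrow>
     (fst x = fst y \<and> E2 (snd x) (snd y)) \<or> (snd x = snd y \<and> E1 (fst x) (fst y))"

definition dom_broadcast2 :: "'a set \<Rightarrow> ('a \<Rightarrow> 'a \<Rightarrow> bool) \<Rightarrow> ('a \<Rightarrow> nat) \<Rightarrow> bool" where
  "dom_broadcast2 V E f \<longleftrightarrow>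
     (\<forall>v\<in>V. f v \<le> 2) \<and>
     (\<forall>u\<in>V. \<exists>v\<in>V. f v > 0 \<and> gdist V E u v \<le> f v)"

definition broadcast_cost :: "'a set \<Rightarrow> ('a \<Rightarrow> nat) \<Rightarrow> nat" where
  "broadcast_cost V f = (\<Sum>v\<in>V. f v)"

definition gamma_b2 :: "'a set \<Rightarrow> ('a \<Rightarrow> 'a \<Rightarrow> bool) \<Rightarrow> nat" where
  "gamma_b2 V E = (LEAST c. \<exists>f. dom_broadcast2 V E f \<and> broadcast_cost V f = c)"

definition grid_gamma :: "nat \<Rightarrow> nat \<Rightarrow> nat" where
  "grid_gamma m n = gamma_b2 (cart_verts (path_verts m) (path_verts n)) (cart_adj path_adj path_adj)"

definition cfun :: "nat \<Rightarrow> nat" where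
  "cfun r = [0, 2, 2, 3, 4, 5, 5, 6, 7, 8] ! r"

end

theory Submission
  imports Defs
begin

(* Lower bound by discharging. Weight the vertices of P_4 x P_n by 6, 2, 2, 6 (top to bottom) in
   every column except the first two, which get 10, 5, 5, 10 and 4, 0, 0, 4. The total weight is
   16n + 6, while every ball of radius r in {1, 2} carries weight at most 20r, so a dominating
   2-limited broadcast costs at least (16n + 6)/20; rounding up gives the stated bound.
   Upper bound: a 10-periodic broadcast of cost 8 per period (strength 2 on two vertices,
   strength 1 on four) dominates every vertex from column 2 on; one strength-1 vertex in the
   first column and, unless n = 5 mod 10, one in the last column take care of the two ends. *)

lemma walk_append: "walk V E k u w \<Longrightarrow> walk V E l w v \<Longrightarrow> walk V E (k + l) u v"
  by (induction k arbitrary: u) auto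

lemma gdist_self: "u \<in> V \<Longrightarrow> gdist V E u u = 0"
  unfolding gdist_def by (rule Least_equality) auto

lemma gamma_b2_le: "dom_broadcast2 V E f \<Longrightarrow> gamma_b2 V E \<le> broadcast_cost V f"
  unfolding gamma_b2_def by (rule Least_le) blast

lemma gamma_b2_attained: "\<exists>f. dom_broadcast2 V E f \<and> broadcast_cost V f = gamma_b2 V E"
proof -
  have "dom_broadcast2 V E (\<lambda>_. 1)"
    unfolding dom_broadcast2_def
  proof (intro conjI ballI)
    fix u assume "u \<in> V"
    then show "\<exists>v\<in>V. 0 < (1::nat) \<and> gdist V E u v \<le> 1"
      by (intro bexI[of _ u]) (simp_all add: gdist_self)
  qed simp
  then have "\<exists>c f. dom_broadcast2 V E f \<and> broadcast_cost V f = c" by blast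
  then show ?thesis
    unfolding gamma_b2_def by (rule LeastI_ex)
qed

lemma weight_le_broadcast_cost:
  fixes w :: "'a \<Rightarrow> nat"
  assumes "finite V" "dom_broadcast2 V E f"
    and ball: "\<And>v r. v \<in> V \<Longrightarrow> 1 \<le> r \<Longrightarrow> r \<le> 2 \<Longrightarrow>
                 (\<Sum>u | u \<in> V \<and> gdist V E u v \<le> r. w u) \<le> K * r"
  shows "(\<Sum>u\<in>V. w u) \<le> K * broadcast_cost V f"
proof -
  let ?hears = "\<lambda>u v. 0 < f v \<and> gdist V E u v \<le> f v"
  have "(\<Sum>u\<in>V. w u) \<le> (\<Sum>u\<in>V. \<Sum>v\<in>V. if ?hears u v then w u else 0)"
  proof (rule sum_mono)
    fix u assume "u \<in> V"
    then obtain v where "v \<in> V" "?hears u v"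
      using assms(2) unfolding dom_broadcast2_def by blast
    then show "w u \<le> (\<Sum>v\<in>V. if ?hears u v then w u else 0)"
      using member_le_sum[of v V "\<lambda>v. if ?hears u v then w u else 0"] assms(1) by simp
  qed
  also have "\<dots> = (\<Sum>v\<in>V. \<Sum>u\<in>V. if ?hears u v then w u else 0)"
    by (rule sum.swap)
  also have "\<dots> \<le> (\<Sum>v\<in>V. K * f v)"
  proof (rule sum_mono)
    fix v assume v: "v \<in> V"
    show "(\<Sum>u\<in>V. if ?hears u v then w u else 0) \<le> K * f v"
    proof (cases "f v = 0")
      case False
      then have "1 \<le> f v" "f v \<le> 2"
        using v assms(2) unfolding dom_broadcast2_def by auto
      moreover have "(\<Sum>u\<in>V. if ?hears u v then w u else 0)
                     = (\<Sum>u | u \<in> V \<and> gdist V E u v \<le> f v. w u)"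
        using False assms(1) by (simp add: sum.inter_filter)
      ultimately show ?thesis using ball[OF v] by presburger
    qed simp
  qed
  also have "\<dots> = K * broadcast_cost V f"
    by (simp add: broadcast_cost_def sum_distrib_left)
  finally show ?thesis .
qed

lemma weight_le_gamma_b2:
  fixes w :: "'a \<Rightarrow> nat"
  assumes "finite V"
    and "\<And>v r. v \<in> V \<Longrightarrow> 1 \<le> r \<Longrightarrow> r \<le> 2 \<Longrightarrow>
           (\<Sum>u | u \<in> V \<and> gdist V E u v \<le> r. w u) \<le> K * r"
  shows "(\<Sum>u\<in>V. w u) \<le> K * gamma_b2 V E"
  using gamma_b2_attained[of V E] weight_le_broadcast_cost[OF assms(1) _ assms(2)] by metis

abbreviation grid :: "nat \<Rightarrow> nat \<Rightarrow> (nat \<times> nat) set" where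
  "grid m n \<equiv> cart_verts (path_verts m) (path_verts n)"

abbreviation grid_adj :: "nat \<times> nat \<Rightarrow> nat \<times> nat \<Rightarrow> bool" where
  "grid_adj \<equiv> cart_adj path_adj path_adj"

lemma mem_grid_iff [simp]: "(i, j) \<in> grid m n \<longleftrightarrow> i < m \<and> j < n"
  by (simp add: cart_verts_def path_verts_def)

lemma grid_eq: "grid m n = {..<m} \<times> {..<n}"
  by (auto simp: cart_verts_def path_verts_def)

(* On nat, (x - y) + (y - x) = |x - y|. *)
definition manhattan :: "nat \<times> nat \<Rightarrow> nat \<times> nat \<Rightarrow> nat" where
  "manhattan u v = (fst u - fst v) + (fst v - fst u) + (snd u - snd v) + (snd v - snd u)"

lemma manhattan_shift_snd [simp]: "manhattan (a, b + k) (i, c + k) = manhattan (a, b) (i, c)"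
  by (simp add: manhattan_def)

lemma walk_path:
  "i < n \<Longrightarrow> j < n \<Longrightarrow> walk (path_verts n) path_adj ((i - j) + (j - i)) i j"
proof (induction "(i - j) + (j - i)" arbitrary: i)
  case 0
  then show ?case by (simp add: path_verts_def)
next
  case (Suc d)
  define i' where "i' = (if i < j then i + 1 else i - 1)"
  have "path_adj i i'" "i' < n" "d = (i' - j) + (j - i')"
    using Suc.hyps(2) Suc.prems unfolding i'_def path_adj_def by auto
  with Suc have "walk (path_verts n) path_adj d i' j" by blast
  with \<open>path_adj i i'\<close> \<open>i < n\<close> show ?case
    unfolding Suc.hyps(2)[symmetric] by (auto simp: path_verts_def)
qed

lemma walk_cart_fst:
  "walk V1 E1 k x y \<Longrightarrow> z \<in> V2 \<Longrightarrow> walk (cart_verts V1 V2) (cart_adj E1 E2) k (x, z) (y, z)"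
  by (induction k arbitrary: x) (auto simp: cart_verts_def cart_adj_def)

lemma walk_cart_snd:
  "walk V2 E2 k x y \<Longrightarrow> z \<in> V1 \<Longrightarrow> walk (cart_verts V1 V2) (cart_adj E1 E2) k (z, x) (z, y)"
  by (induction k arbitrary: x) (auto simp: cart_verts_def cart_adj_def)

lemma walk_grid_manhattan:
  assumes "u \<in> grid m n" "v \<in> grid m n"
  shows "walk (grid m n) grid_adj (manhattan u v) u v"
proof -
  obtain a b c d where uv: "u = (a, b)" "v = (c, d)" and "a < m" "b < n" "c < m" "d < n"
    using assms by (cases u, cases v) auto
  then have "walk (grid m n) grid_adj ((a - c) + (c - a)) (a, b) (c, b)"
    and "walk (grid m n) grid_adj ((b - d) + (d - b)) (c, b) (c, d)"
    by (auto intro!: walk_cart_fst walk_cart_snd walk_path simp del: mem_grid_iff)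
       (auto simp: path_verts_def)
  then show ?thesis
    unfolding uv manhattan_def by (metis add.assoc fst_conv snd_conv walk_append)
qed

lemma manhattan_le_walk: "walk V grid_adj k u v \<Longrightarrow> manhattan u v \<le> k"
proof (induction k arbitrary: u)
  case 0
  then show ?case by (simp add: manhattan_def)
next
  case (Suc k)
  then obtain w where "grid_adj u w" "walk V grid_adj k w v" by auto
  moreover have "manhattan u v \<le> manhattan w v + 1" if "grid_adj u w"
    using that by (auto simp: manhattan_def cart_adj_def path_adj_def)
  ultimately show ?case using Suc.IH by fastforce
qed

lemma gdist_grid:
  "u \<in> grid m n \<Longrightarrow> v \<in> grid m n \<Longrightarrow> gdist (grid m n) grid_adj u v = manhattan u v"
  unfolding gdist_def by (rule Least_equality) (auto intro: walk_grid_manhattan manhattan_le_walk)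

lemma sum_lessThan_periodic:
  fixes g :: "nat \<Rightarrow> 'a::comm_semiring_1"
  assumes periodic: "\<And>j. g (j + p) = g j"
  shows "(\<Sum>j<n. g j) = of_nat (n div p) * (\<Sum>j<p. g j) + (\<Sum>j<n mod p. g j)"
proof -
  have "(\<Sum>j<p * q + r. g j) = of_nat q * (\<Sum>j<p. g j) + (\<Sum>j<r. g j)" for q r
  proof (induction q)
    case (Suc q)
    have "(\<Sum>j<p * Suc q + r. g j)
          = (\<Sum>j\<in>{0..<p}. g j) + (\<Sum>j\<in>{0 + p..<(p * q + r) + p}. g j)"
      by (simp add: atLeast0LessThan[symmetric] sum.atLeastLessThan_concat ac_simps)
    also have "\<dots> = (\<Sum>j<p. g j) + (\<Sum>j<p * q + r. g j)"
      by (simp only: sum.shift_bounds_nat_ivl periodic atLeast0LessThan)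
    finally show ?case using Suc.IH by (simp add: algebra_simps)
  qed simp
  then show ?thesis by (metis div_mult_mod_eq mult.commute)
qed

definition end_weight :: "nat \<times> nat \<Rightarrow> nat" where
  "end_weight u =
     (if fst u = 0 \<or> fst u = 3
      then (if snd u = 0 then 10 else if snd u = 1 then 4 else 6)
      else (if snd u = 0 then 5 else if snd u = 1 then 0 else 2))"

lemma end_weight_column:
  "(\<Sum>i<4. end_weight (i, j)) = (if j = 0 then 30 else if j = 1 then 8 else 16)"
  by (simp add: end_weight_def numeral_eq_Suc)

lemma sum_end_weight:
  assumes "2 \<le> n"
  shows "(\<Sum>u\<in>grid 4 n. end_weight u) = 16 * n + 6"
proof -
  have "(\<Sum>u\<in>grid 4 n. end_weight u) = (\<Sum>i<4. \<Sum>j<n. end_weight (i, j))"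
    by (simp add: grid_eq sum.cartesian_product)
  also have "\<dots> = (\<Sum>j<n. \<Sum>i<4. end_weight (i, j))"
    by (rule sum.swap)
  also have "\<dots> = 16 * n + 6"
    using assms
  proof (induction n rule: dec_induct)
    case base
    then show ?case by (simp add: end_weight_column numeral_2_eq_2)
  next
    case (step n)
    then show ?case by (simp add: end_weight_column)
  qed
  finally show ?thesis .
qed

lemma end_weight_window:
  assumes "a < 4" "r = 1 \<or> r = 2"
  shows "(\<Sum>i<4. \<Sum>j\<in>{c - 2..c + 2}.
            if manhattan (i, j) (a, c) \<le> r then end_weight (i, j) else 0) \<le> 20 * r"
proof -
  have rows: "{..<4::nat} = {0, 1, 2, 3}" by auto
  have cols: "{c - 2..c + 2} = {c - 2, c - 1, c, c + 1, c + 2}" by auto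
  have "a = 0 \<or> a = 1 \<or> a = 2 \<or> a = 3" using assms(1) by auto
  moreover have "c = 0 \<or> c = 1 \<or> c = 2 \<or> c = 3 \<or> (\<exists>l. c = l + 4)" by presburger
  ultimately show ?thesis using assms(2) unfolding rows cols
    by (elim disjE exE) (simp_all add: manhattan_def end_weight_def)
qed

lemma end_weight_ball:
  assumes "a < 4" "1 \<le> r" "r \<le> 2"
  shows "(\<Sum>u | u \<in> grid 4 n \<and> manhattan u (a, c) \<le> r. end_weight u) \<le> 20 * r"
proof -
  let ?window = "{..<4} \<times> {c - 2..c + 2}"
  have "(\<Sum>u | u \<in> grid 4 n \<and> manhattan u (a, c) \<le> r. end_weight u)
        \<le> (\<Sum>u | u \<in> ?window \<and> manhattan u (a, c) \<le> r. end_weight u)"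
    using assms(3) by (intro sum_mono2) (auto simp: grid_eq manhattan_def)
  also have "\<dots> = (\<Sum>u\<in>?window. if manhattan u (a, c) \<le> r then end_weight u else 0)"
    by (rule sum.inter_filter) simp
  also have "\<dots> = (\<Sum>i<4. \<Sum>j\<in>{c - 2..c + 2}.
                     if manhattan (i, j) (a, c) \<le> r then end_weight (i, j) else 0)"
    unfolding sum.cartesian_product by (rule sum.cong) auto
  also have "\<dots> \<le> 20 * r"
    using assms by (intro end_weight_window) auto
  finally show ?thesis .
qed

lemma grid_gamma_4_weight_bound:
  assumes "2 \<le> n"
  shows "16 * n + 6 \<le> 20 * grid_gamma 4 n"
  unfolding grid_gamma_def sum_end_weight[OF assms, symmetric]
proof (rule weight_le_gamma_b2)
  fix v and r :: nat
  assume v: "v \<in> grid 4 n" and r: "1 \<le> r" "r \<le> 2"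
  then obtain a c where "v = (a, c)" "a < 4" by (cases v) auto
  moreover have "{u. u \<in> grid 4 n \<and> gdist (grid 4 n) grid_adj u v \<le> r}
               = {u. u \<in> grid 4 n \<and> manhattan u v \<le> r}"
    using v by (auto simp: gdist_grid)
  ultimately show
    "(\<Sum>u | u \<in> grid 4 n \<and> gdist (grid 4 n) grid_adj u v \<le> r. end_weight u) \<le> 20 * r"
    using end_weight_ball r by simp
qed (simp add: grid_eq)

lemma div10_cfun_le:
  fixes n g :: nat
  assumes "16 * n + 6 \<le> 20 * g"
  shows "8 * (n div 10) + cfun (n mod 10) \<le> g"
proof -
  have "n mod 10 = 0 \<or> n mod 10 = 1 \<or> n mod 10 = 2 \<or> n mod 10 = 3 \<or> n mod 10 = 4 \<or>
        n mod 10 = 5 \<or> n mod 10 = 6 \<or> n mod 10 = 7 \<or> n mod 10 = 8 \<or> n mod 10 = 9"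
    by presburger
  moreover have "160 * (n div 10) + 16 * (n mod 10) + 6 \<le> 20 * g"
    using assms div_mult_mod_eq[of n 10] by linarith
  ultimately show ?thesis by (elim disjE) (simp_all add: cfun_def; presburger)+
qed

definition pattern :: "nat \<Rightarrow> nat \<Rightarrow> nat" where
  "pattern i j =
     (let s = j mod 10 in
      if i = 0 \<and> (s = 2 \<or> s = 6) \<or> i = 3 \<and> (s = 1 \<or> s = 7) then 1
      else if i = 1 \<and> s = 9 \<or> i = 2 \<and> s = 4 then 2
      else 0)"

lemma pattern_shift [simp]: "pattern i (j + 10) = pattern i j"
  by (simp add: pattern_def)

lemma pattern_dominates:
  assumes "a < 4" "2 \<le> b"
  shows "\<exists>i<4. \<exists>c\<le>b + 2. 0 < pattern i c \<and> manhattan (a, b) (i, c) \<le> pattern i c"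
  using assms
proof (induction b rule: less_induct)
  case (less b)
  show ?case
  proof (cases "b < 12")
    case True
    have one_period: "\<forall>b\<in>{2..<12}. \<forall>a\<in>{..<4}.
        \<exists>i\<in>{..<4}. \<exists>c\<in>{b - 2, b - 1, b, b + 1, b + 2}.
          0 < pattern i c \<and> manhattan (a, b) (i, c) \<le> pattern i c"
      by (simp add: atLeastLessThan_nat_numeral lessThan_nat_numeral pattern_def manhattan_def)
    have "b \<in> {2..<12}" "a \<in> {..<4}" using True less.prems by auto
    from one_period[rule_format, OF this] obtain i c
      where "i < 4" "c \<in> {b - 2, b - 1, b, b + 1, b + 2}"
        "0 < pattern i c" "manhattan (a, b) (i, c) \<le> pattern i c"
      by blast
    then show ?thesis by (intro exI[of _ i] conjI exI[of _ c]) auto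
  next
    case False
    then have "\<exists>i<4. \<exists>c\<le>b - 10 + 2.
                 0 < pattern i c \<and> manhattan (a, b - 10) (i, c) \<le> pattern i c"
      using less.prems by (intro less.IH) auto
    then obtain i c where
      "i < 4" "c \<le> b - 10 + 2" "0 < pattern i c" "manhattan (a, b - 10) (i, c) \<le> pattern i c"
      by blast
    moreover have "manhattan (a, b) (i, c + 10) = manhattan (a, b - 10) (i, c)"
      using False manhattan_shift_snd[of a "b - 10" 10 i c] by simp
    ultimately show ?thesis using False
      by (intro exI[of _ i] conjI exI[of _ "c + 10"]) auto
  qed
qed

definition end_extras :: "nat \<Rightarrow> (nat \<times> nat) set" where
  "end_extras n =
     insert (1, 0)
       (if n mod 10 \<in> {1, 4} then {(2, n - 1)} else if n mod 10 = 9 then {(1, n - 1)} else {})"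

definition grid_broadcast :: "nat \<Rightarrow> nat \<times> nat \<Rightarrow> nat" where
  "grid_broadcast n u = pattern (fst u) (snd u) + (if u \<in> end_extras n then 1 else 0)"

lemma pattern_le_2: "pattern i j \<le> 2"
  by (simp add: pattern_def Let_def)

lemma pattern_end_extras:
  assumes "u \<in> end_extras n"
  shows "pattern (fst u) (snd u) = 0"
proof -
  have "(n - 1) mod 10 = n mod 10 - 1" if "n mod 10 \<noteq> 0"
  proof -
    have "n - 1 = (n mod 10 - 1) + 10 * (n div 10)"
      using that div_mult_mod_eq[of n 10] by linarith
    then show ?thesis by simp
  qed
  with assms show ?thesis
    by (auto simp: end_extras_def pattern_def split: if_splits)
qed

lemma grid_broadcast_le_2: "grid_broadcast n u \<le> 2"
  using pattern_le_2 pattern_end_extras by (simp add: grid_broadcast_def)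

lemma grid_broadcast_shift:
  "1 \<le> c \<Longrightarrow> grid_broadcast (n + 10) (i, c + 10) = grid_broadcast n (i, c)"
  by (auto simp: grid_broadcast_def end_extras_def)

lemma grid_broadcast_left_end:
  assumes "4 \<le> n" "a < 4" "b < 2"
  shows "\<exists>v\<in>grid 4 n. 0 < grid_broadcast n v \<and> manhattan (a, b) v \<le> grid_broadcast n v"
proof -
  have "\<forall>a\<in>{..<4}. \<forall>b\<in>{..<2}. \<exists>v\<in>{(1, 0), (0, 2), (3, 1)}. manhattan (a, b) v \<le> 1"
    by (simp add: lessThan_nat_numeral manhattan_def)
  then obtain v where "v \<in> {(1, 0), (0, 2), (3, 1)}" "manhattan (a, b) v \<le> 1"
    using assms(2,3) by blast
  moreover from this(1) have "v \<in> grid 4 n" "1 \<le> grid_broadcast n v"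
    using assms(1) by (auto simp: grid_broadcast_def end_extras_def pattern_def)
  ultimately show ?thesis by (intro bexI[of _ v]) auto
qed

lemma grid_broadcast_right_end:
  assumes "4 \<le> n" "n mod 10 \<in> {1, 4, 5, 9}" "a < 4" "b < n" "n \<le> b + 2"
  shows "\<exists>i<4. \<exists>c\<in>{1..<n}.
           0 < grid_broadcast n (i, c) \<and> manhattan (a, b) (i, c) \<le> grid_broadcast n (i, c)"
  using assms
proof (induction n arbitrary: b rule: less_induct)
  case (less n)
  show ?case
  proof (cases "n < 14")
    case True
    (* the least n >= 4 in each of the four residue classes *)
    have base_cases: "\<forall>n\<in>{4, 5, 9, 11}. \<forall>b\<in>{n - 2, n - 1}. \<forall>a\<in>{..<4}.
        \<exists>i\<in>{..<4}. \<exists>c\<in>{n - 3, n - 2, n - 1}.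
          0 < grid_broadcast n (i, c) \<and> manhattan (a, b) (i, c) \<le> grid_broadcast n (i, c)"
      by (simp add: lessThan_nat_numeral grid_broadcast_def end_extras_def pattern_def manhattan_def)
    have "n \<in> {4, 5, 9, 11}"
      using True less.prems(1,2) by (cases "n < 10") (auto simp: le_mod_geq)
    moreover have "b \<in> {n - 2, n - 1}" "a \<in> {..<4}"
      using less.prems(3-5) by auto
    ultimately obtain i c where "i < 4" "c \<in> {n - 3, n - 2, n - 1}"
      "0 < grid_broadcast n (i, c)" "manhattan (a, b) (i, c) \<le> grid_broadcast n (i, c)"
      using base_cases by blast
    then show ?thesis using less.prems(1) by (intro exI[of _ i] conjI bexI[of _ c]) auto
  next
    case False
    then have "(n - 10) mod 10 = n mod 10" by (simp add: le_mod_geq)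
    then have "\<exists>i<4. \<exists>c\<in>{1..<n - 10}. 0 < grid_broadcast (n - 10) (i, c) \<and>
                 manhattan (a, b - 10) (i, c) \<le> grid_broadcast (n - 10) (i, c)"
      using False less.prems by (intro less.IH) auto
    then obtain i c where
      "i < 4" "c \<in> {1..<n - 10}" "0 < grid_broadcast (n - 10) (i, c)"
      "manhattan (a, b - 10) (i, c) \<le> grid_broadcast (n - 10) (i, c)"
      by blast
    moreover have "grid_broadcast n (i, c + 10) = grid_broadcast (n - 10) (i, c)"
      using grid_broadcast_shift[of c "n - 10" i] False \<open>c \<in> {1..<n - 10}\<close> by simp
    moreover have "manhattan (a, b) (i, c + 10) = manhattan (a, b - 10) (i, c)"
      using False less.prems manhattan_shift_snd[of a "b - 10" 10 i c] by simp
    ultimately show ?thesis using False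
      by (intro exI[of _ i] conjI bexI[of _ "c + 10"]) auto
  qed
qed

lemma grid_broadcast_covers:
  assumes "4 \<le> n" "n mod 10 \<in> {1, 4, 5, 9}" "u \<in> grid 4 n"
  shows "\<exists>v\<in>grid 4 n. 0 < grid_broadcast n v \<and> manhattan u v \<le> grid_broadcast n v"
proof -
  obtain a b where u: "u = (a, b)" and a: "a < 4" and b: "b < n"
    using assms(3) by (cases u) auto
  consider "b < 2" | "2 \<le> b" "b + 2 < n" | "n \<le> b + 2" by linarith
  then show ?thesis
  proof cases
    case 1
    then show ?thesis using grid_broadcast_left_end[OF assms(1) a] u by blast
  next
    case 2
    with a obtain i c where "i < 4" "c \<le> b + 2"
      "0 < pattern i c" "manhattan (a, b) (i, c) \<le> pattern i c"
      using pattern_dominates by blast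
    moreover have "pattern i c \<le> grid_broadcast n (i, c)"
      by (simp add: grid_broadcast_def)
    ultimately show ?thesis using 2 u by (intro bexI[of _ "(i, c)"]) auto
  next
    case 3
    with a b obtain i c where "i < 4" "c \<in> {1..<n}"
      "0 < grid_broadcast n (i, c)" "manhattan (a, b) (i, c) \<le> grid_broadcast n (i, c)"
      using grid_broadcast_right_end[OF assms(1,2)] by blast
    then show ?thesis using u by (intro bexI[of _ "(i, c)"]) auto
  qed
qed

lemma grid_broadcast_dominating:
  assumes "4 \<le> n" "n mod 10 \<in> {1, 4, 5, 9}"
  shows "dom_broadcast2 (grid 4 n) grid_adj (grid_broadcast n)"
  unfolding dom_broadcast2_def
proof (intro conjI ballI)
  fix u assume u: "u \<in> grid 4 n"
  then obtain v where "v \<in> grid 4 n" "0 < grid_broadcast n v" "manhattan u v \<le> grid_broadcast n v"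
    using grid_broadcast_covers[OF assms] by blast
  then show "\<exists>v\<in>grid 4 n.
      0 < grid_broadcast n v \<and> gdist (grid 4 n) grid_adj u v \<le> grid_broadcast n v"
    using u by (intro bexI[of _ v]) (simp_all add: gdist_grid)
qed (rule grid_broadcast_le_2)

lemma sum_pattern_grid:
  "(\<Sum>u\<in>grid 4 n. pattern (fst u) (snd u))
   = 8 * (n div 10) + (\<Sum>j<n mod 10. \<Sum>i<4. pattern i j)"
proof -
  have "(\<Sum>u\<in>grid 4 n. pattern (fst u) (snd u)) = (\<Sum>i<4. \<Sum>j<n. pattern i j)"
    unfolding grid_eq sum.cartesian_product by (rule sum.cong) auto
  also have "\<dots> = (\<Sum>j<n. \<Sum>i<4. pattern i j)"
    by (rule sum.swap)
  also have "\<dots> = n div 10 * (\<Sum>j<10. \<Sum>i<4. pattern i j)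
                   + (\<Sum>j<n mod 10. \<Sum>i<4. pattern i j)"
    using sum_lessThan_periodic[of "\<lambda>j. \<Sum>i<4. pattern i j" 10 n] by simp
  also have "(\<Sum>j<10. \<Sum>i<4. pattern i j) = 8"
    by (simp add: lessThan_nat_numeral pattern_def)
  finally show ?thesis by simp
qed

lemma grid_broadcast_cost:
  assumes "4 \<le> n" "n mod 10 \<in> {1, 4, 5, 9}"
  shows "broadcast_cost (grid 4 n) (grid_broadcast n) = 8 * (n div 10) + cfun (n mod 10)"
proof -
  have extras: "end_extras n \<subseteq> grid 4 n"
    using assms(1) by (auto simp: end_extras_def)
  have "broadcast_cost (grid 4 n) (grid_broadcast n)
        = (\<Sum>u\<in>grid 4 n. pattern (fst u) (snd u))
          + (\<Sum>u\<in>grid 4 n. if u \<in> end_extras n then 1 else 0)"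
    unfolding broadcast_cost_def grid_broadcast_def by (rule sum.distrib)
  also have "(\<Sum>u\<in>grid 4 n. if u \<in> end_extras n then 1 else 0)
             = (\<Sum>u\<in>grid 4 n \<inter> end_extras n. 1)"
    by (rule sum.inter_restrict[symmetric]) (simp add: grid_eq)
  also have "\<dots> = card (end_extras n)"
    using extras by (simp add: Int_absorb1)
  also have "(\<Sum>u\<in>grid 4 n. pattern (fst u) (snd u))
             = 8 * (n div 10) + (\<Sum>j<n mod 10. \<Sum>i<4. pattern i j)"
    by (rule sum_pattern_grid)
  also have "8 * (n div 10) + (\<Sum>j<n mod 10. \<Sum>i<4. pattern i j) + card (end_extras n)
             = 8 * (n div 10) + cfun (n mod 10)"
    using assms by (auto simp: end_extras_def lessThan_nat_numeral pattern_def cfun_def)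
  finally show ?thesis .
qed

theorem corollary4p10:
  shows "(\<forall>n::nat. n \<ge> 4 \<longrightarrow> 8 * (n div 10) + cfun (n mod 10) \<le> grid_gamma 4 n) \<and>
         (\<forall>n::nat. n \<ge> 4 \<longrightarrow> n mod 10 \<in> {1, 4, 5, 9} \<longrightarrow>
           grid_gamma 4 n = 8 * (n div 10) + cfun (n mod 10))"
proof -
  have lower: "8 * (n div 10) + cfun (n mod 10) \<le> grid_gamma 4 n" if "4 \<le> n" for n
    using that by (intro div10_cfun_le grid_gamma_4_weight_bound) simp
  have upper: "grid_gamma 4 n \<le> 8 * (n div 10) + cfun (n mod 10)"
    if "4 \<le> n" "n mod 10 \<in> {1, 4, 5, 9}" for n
    using gamma_b2_le[OF grid_broadcast_dominating[OF that]] grid_broadcast_cost[OF that]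
    by (simp add: grid_gamma_def)
  show ?thesis using lower upper by (blast intro: le_antisym)
qed

end
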